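(* Suppose $H$ is a degenerate hypergraph. Then every subgraph of $H$ is degenerate, and every blowup $H(s_1,\dots,s_m)$ of $H$ is degenerate. Moreover, any subgraph of a blowup of a flag is degenerate.
   Context: A hypergraph $H=(V,E)$ has finite vertex set $V$ and edge set $E\subseteq 2^V$; $R(H)=\{|F|:F\in E\}$. $H_1\subseteq H_2$ (subgraph) means there is an injective $f\colon V(H_1)\to V(H_2)$ with $f(F)\in E(H_2)$ for all $F\in E(H_1)$. For $G$ on $n$ vertices, $h_n(G)=\sum_{F\in E(G)}1/\binom{n}{|F|}$; $\pi_n(H)=\max\{h_n(G): G\text{ on } n \text{ vertices}, R(G)\subseteq R(H), H\not\subseteq G\}$ and $\pi(H)=\lim_n\pi_n(H)$. $H$ is degenerate if $\pi(H)=|R(H)|-1$. For $H$ on vertex set $\{1,\dots,m\}$ and positive integers $s_i$, the blowup $H(s_1,\dots,s_m)$ has vertex set $V_1\sqcup\dots\sqcup V_m$, $|V_i|=s_i$, and edge set $\bigcup_{F\in E(H)}\prod_{i\in F}V_i$. A flag is a hypergraph having exactly one edge of each size in its set of edge types. *)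

theory Defs
  imports Complex_Main
begin

type_synonym 'a hg = "'a set \<times> 'a set set"

definition verts :: "'a hg \<Rightarrow> 'a set" where "verts H = fst H"
definition edges :: "'a hg \<Rightarrow> 'a set set" where "edges H = snd H"

definition hypergraph :: "'a hg \<Rightarrow> bool" where
  "hypergraph H \<longleftrightarrow> finite (verts H) \<and> edges H \<subseteq> Pow (verts H)"

definition edge_sizes :: "'a hg \<Rightarrow> nat set" where
  "edge_sizes H = card ` edges H"

definition subgraph :: "'a hg \<Rightarrow> 'b hg \<Rightarrow> bool" where
  "subgraph H1 H2 \<longleftrightarrow> (\<exists>f. inj_on f (verts H1) \<and> f ` verts H1 \<subseteq> verts H2 \<and>
      (\<forall>F\<in>edges H1. f ` F \<in> edges H2))"

definition h_n :: "nat \<Rightarrow> 'a hg \<Rightarrow> real" where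
  "h_n n G = (\<Sum>F\<in>edges G. 1 / real (n choose card F))"

text \<open>pi_n(H); hosts G on n vertices are taken (up to isomorphism) on vertex set {0..<n}.\<close>
definition pi_n :: "'a hg \<Rightarrow> nat \<Rightarrow> real" where
  "pi_n H n = Sup {h_n n G | G :: nat hg. hypergraph G \<and> verts G = {0..<n} \<and>
      edge_sizes G \<subseteq> edge_sizes H \<and> \<not> subgraph H G}"

definition degenerate :: "'a hg \<Rightarrow> bool" where
  "degenerate H \<longleftrightarrow> (\<lambda>n. pi_n H n) \<longlonglongrightarrow> real (card (edge_sizes H)) - 1"

text \<open>Blowup H(s): class of v is {v} \<times> {0..<s v}; edges are transversals of the classes of an edge.\<close>
definition blowup :: "'a hg \<Rightarrow> ('a \<Rightarrow> nat) \<Rightarrow> ('a \<times> nat) hg" where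
  "blowup H s = ({(v, j). v \<in> verts H \<and> j < s v},
     {(\<lambda>v. (v, g v)) ` F | F g. F \<in> edges H \<and> (\<forall>v\<in>F. g v < s v)})"

definition flag :: "'a hg \<Rightarrow> bool" where
  "flag H \<longleftrightarrow> (\<forall>k\<in>edge_sizes H. \<exists>!F. F \<in> edges H \<and> card F = k)"

end

theory Submission
  imports Defs "HOL-Library.FuncSet"
begin

text \<open>Taking all sets whose sizes lie in \<open>R(H)\<close> except the size of one edge of \<open>H\<close> shows
  \<open>pi_n(H) \<ge> |R(H)| - 1\<close> for large \<open>n\<close>. If \<open>K \<subseteq> H\<close>, adding the complete layers of the sizes in
  \<open>R(H) - R(K)\<close> to a \<open>K\<close>-free host yields an \<open>H\<close>-free one, so
  \<open>pi_n(K) \<le> pi_n(H) - (|R(H)| - |R(K)|)\<close> and degeneracy passes to \<open>K\<close>. A flag is degenerate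
  because every injection of its vertices into a host without a copy of it misses some edge. A
  blowup arises from \<open>H\<close> by repeatedly cloning a vertex, and cloning preserves degeneracy by supersaturation: a host of
  density above \<open>|R(H)| - 1 + 2\<delta>\<close> contains more than \<open>n ^ (|V(H)| - 1)\<close> embeddings of \<open>H\<close>,
  hence two that differ only at the cloned vertex, which together embed the clone.\<close>

lemma verts_pair [simp]: "verts (V, E) = V"
  by (simp add: verts_def)

lemma edges_pair [simp]: "edges (V, E) = E"
  by (simp add: edges_def)

lemma hypergraph_finite_verts: "hypergraph H \<Longrightarrow> finite (verts H)"
  unfolding hypergraph_def by blast

lemma hypergraph_edge_subset: "hypergraph H \<Longrightarrow> F \<in> edges H \<Longrightarrow> F \<subseteq> verts H"
  unfolding hypergraph_def by blast

lemma hypergraph_finite_edges: "hypergraph H \<Longrightarrow> finite (edges H)"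
  unfolding hypergraph_def by (meson finite_Pow_iff finite_subset)

lemma hypergraph_finite_edge_sizes: "hypergraph H \<Longrightarrow> finite (edge_sizes H)"
  unfolding edge_sizes_def by (simp add: hypergraph_finite_edges)

lemma card_image_edge:
  assumes "hypergraph H" "inj_on f (verts H)" "F \<in> edges H"
  shows "card (f ` F) = card F"
  using assms by (meson card_image hypergraph_edge_subset inj_on_subset)

lemma subgraph_trans:
  assumes "subgraph A B" "subgraph B C"
  shows "subgraph A C"
proof -
  obtain g where g: "inj_on g (verts A)" "g ` verts A \<subseteq> verts B" "\<forall>F\<in>edges A. g ` F \<in> edges B"
    using assms(1) unfolding subgraph_def by blast
  obtain f where f: "inj_on f (verts B)" "f ` verts B \<subseteq> verts C" "\<forall>F\<in>edges B. f ` F \<in> edges C"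
    using assms(2) unfolding subgraph_def by blast
  have "inj_on (f \<circ> g) (verts A)"
    using g f by (meson comp_inj_on inj_on_subset)
  moreover have "(f \<circ> g) ` verts A \<subseteq> verts C"
    using g f by (auto simp: image_comp[symmetric])
  moreover have "\<forall>F\<in>edges A. (f \<circ> g) ` F \<in> edges C"
    using g f by (metis image_comp)
  ultimately show ?thesis
    unfolding subgraph_def by blast
qed

lemma subgraph_edge_sizes:
  assumes "hypergraph A" "subgraph A B"
  shows "edge_sizes A \<subseteq> edge_sizes B"
proof
  fix k assume "k \<in> edge_sizes A"
  then obtain F where F: "F \<in> edges A" "k = card F"
    unfolding edge_sizes_def by blast
  obtain f where f: "inj_on f (verts A)" "\<forall>F\<in>edges A. f ` F \<in> edges B"
    using assms(2) unfolding subgraph_def by blast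
  have "k = card (f ` F)"
    using card_image_edge[OF assms(1) f(1) F(1)] F(2) by simp
  then show "k \<in> edge_sizes B"
    using f(2) F(1) unfolding edge_sizes_def by blast
qed

lemma subgraph_edges_ne:
  assumes "subgraph A B" "edges A \<noteq> {}"
  shows "edges B \<noteq> {}"
  using assms unfolding subgraph_def by blast

lemma edgeless_subgraph:
  assumes "hypergraph H" "edges H = {}" "card (verts H) \<le> card (verts G)" "finite (verts G)"
  shows "subgraph H G"
proof -
  obtain f where "f ` verts H \<subseteq> verts G" "inj_on f (verts H)"
    using card_le_inj[OF hypergraph_finite_verts[OF assms(1)] assms(4)] assms(3) by auto
  then show ?thesis
    unfolding subgraph_def using assms(2) by blast
qed

lemma h_n_by_size:
  assumes "finite (edges G)" "finite T" "edge_sizes G \<subseteq> T"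
  shows "h_n n G = (\<Sum>k\<in>T. real (card {F\<in>edges G. card F = k}) / real (n choose k))"
proof -
  have "h_n n G = (\<Sum>k\<in>T. \<Sum>F\<in>{F\<in>edges G. card F = k}. 1 / real (n choose card F))"
    unfolding h_n_def using assms by (intro sum.group[symmetric]) (auto simp: edge_sizes_def)
  also have "\<dots> = (\<Sum>k\<in>T. \<Sum>F\<in>{F\<in>edges G. card F = k}. 1 / real (n choose k))"
    by (intro sum.cong refl) auto
  finally show ?thesis
    by simp
qed

lemma h_n_le_card_edge_sizes:
  assumes "hypergraph G" "card (verts G) = n"
  shows "h_n n G \<le> card (edge_sizes G)"
proof -
  have "h_n n G = (\<Sum>k\<in>edge_sizes G. real (card {F\<in>edges G. card F = k}) / real (n choose k))"
    using assms(1) by (intro h_n_by_size) (auto simp: hypergraph_finite_edges hypergraph_finite_edge_sizes)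
  also have "\<dots> \<le> (\<Sum>k\<in>edge_sizes G. 1)"
  proof (intro sum_mono)
    fix k
    have "{F\<in>edges G. card F = k} \<subseteq> {B. B \<subseteq> verts G \<and> card B = k}"
      using hypergraph_edge_subset[OF assms(1)] by blast
    then have "card {F\<in>edges G. card F = k} \<le> card {B. B \<subseteq> verts G \<and> card B = k}"
      using hypergraph_finite_verts[OF assms(1)] by (intro card_mono) auto
    then have "card {F\<in>edges G. card F = k} \<le> n choose k"
      using n_subsets[OF hypergraph_finite_verts[OF assms(1)], of k] assms(2) by simp
    then show "real (card {F\<in>edges G. card F = k}) / real (n choose k) \<le> 1"
      by (cases "n choose k = 0") (auto simp: divide_le_eq_1)
  qed
  finally show ?thesis
    by simp
qed

definition complete_layers :: "nat \<Rightarrow> nat set \<Rightarrow> nat hg" where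
  "complete_layers n T = ({0..<n}, {F. F \<subseteq> {0..<n} \<and> card F \<in> T})"

lemma verts_complete_layers [simp]: "verts (complete_layers n T) = {0..<n}"
  by (simp add: complete_layers_def)

lemma hypergraph_complete_layers: "hypergraph (complete_layers n T)"
  unfolding complete_layers_def hypergraph_def by auto

lemma edge_sizes_complete_layers: "edge_sizes (complete_layers n T) \<subseteq> T"
  unfolding complete_layers_def edge_sizes_def by auto

lemma h_n_complete_layers:
  assumes "finite T" "\<forall>k\<in>T. k \<le> n"
  shows "h_n n (complete_layers n T) = card T"
proof -
  let ?E = "edges (complete_layers n T)"
  have "h_n n (complete_layers n T) = (\<Sum>k\<in>T. real (card {F\<in>?E. card F = k}) / real (n choose k))"
    using assms(1) hypergraph_finite_edges[OF hypergraph_complete_layers]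
    by (intro h_n_by_size edge_sizes_complete_layers)
  also have "\<dots> = (\<Sum>k\<in>T. 1)"
  proof (intro sum.cong refl)
    fix k assume k: "k \<in> T"
    have "{F\<in>?E. card F = k} = {B. B \<subseteq> {0..<n} \<and> card B = k}"
      using k unfolding complete_layers_def by auto
    then show "real (card {F\<in>?E. card F = k}) / real (n choose k) = 1"
      using n_subsets[of "{0..<n}" k] assms(2) k by (simp add: not_less[symmetric])
  qed
  finally show ?thesis
    by simp
qed

subsection \<open>The extremal function \<open>pi_n\<close>\<close>

lemma pi_n_upper:
  assumes "hypergraph H" "hypergraph G" "verts G = {0..<n}"
    "edge_sizes G \<subseteq> edge_sizes H" "\<not> subgraph H G"
  shows "h_n n G \<le> pi_n H n"
proof -
  let ?D = "{h_n n G | G :: nat hg. hypergraph G \<and> verts G = {0..<n} \<and>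
      edge_sizes G \<subseteq> edge_sizes H \<and> \<not> subgraph H G}"
  have "x \<le> card (edge_sizes H)" if "x \<in> ?D" for x
  proof -
    obtain G' :: "nat hg" where G': "x = h_n n G'" "hypergraph G'" "verts G' = {0..<n}"
        "edge_sizes G' \<subseteq> edge_sizes H"
      using \<open>x \<in> ?D\<close> by blast
    have "x \<le> card (edge_sizes G')"
      using h_n_le_card_edge_sizes[OF G'(2)] G' by simp
    also have "\<dots> \<le> card (edge_sizes H)"
      using G'(4) hypergraph_finite_edge_sizes[OF assms(1)] by (simp add: card_mono)
    finally show ?thesis .
  qed
  then have "bdd_above ?D"
    by (meson bdd_aboveI)
  moreover have "h_n n G \<in> ?D"
    using assms(2-5) by blast
  ultimately show ?thesis
    unfolding pi_n_def by (rule cSup_upper[rotated])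
qed

lemma pi_n_least:
  assumes "edges H \<noteq> {}"
    and "\<And>G :: nat hg. hypergraph G \<Longrightarrow> verts G = {0..<n} \<Longrightarrow>
        edge_sizes G \<subseteq> edge_sizes H \<Longrightarrow> \<not> subgraph H G \<Longrightarrow> h_n n G \<le> c"
  shows "pi_n H n \<le> c"
  unfolding pi_n_def
proof (rule cSup_least)
  let ?E = "({0..<n}, {}) :: nat hg"
  have "hypergraph ?E" "edge_sizes ?E \<subseteq> edge_sizes H" "\<not> subgraph H ?E"
    using assms(1) by (auto simp: hypergraph_def edge_sizes_def subgraph_def)
  then show "{h_n n G | G :: nat hg. hypergraph G \<and> verts G = {0..<n} \<and>
      edge_sizes G \<subseteq> edge_sizes H \<and> \<not> subgraph H G} \<noteq> {}"
    by force
qed (use assms(2) in blast)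

text \<open>Witness: all subsets of \<open>{0..<n}\<close> whose sizes lie in \<open>R(H)\<close>, except the size of one edge
  of \<open>H\<close>.\<close>

lemma pi_n_lower:
  assumes "hypergraph H" "edges H \<noteq> {}" "\<forall>k\<in>edge_sizes H. k \<le> n"
  shows "real (card (edge_sizes H)) - 1 \<le> pi_n H n"
proof -
  obtain F0 where F0: "F0 \<in> edges H"
    using assms(2) by blast
  define T where "T = edge_sizes H - {card F0}"
  have R: "card F0 \<in> edge_sizes H" "finite (edge_sizes H)"
    using F0 hypergraph_finite_edge_sizes[OF assms(1)] by (auto simp: edge_sizes_def)
  have "\<not> subgraph H (complete_layers n T)"
  proof
    assume "subgraph H (complete_layers n T)"
    then obtain f where "inj_on f (verts H)" "f ` F0 \<in> edges (complete_layers n T)"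
      using F0 unfolding subgraph_def by blast
    then show False
      using card_image_edge[OF assms(1) _ F0] unfolding complete_layers_def T_def by auto
  qed
  then have "h_n n (complete_layers n T) \<le> pi_n H n"
    using edge_sizes_complete_layers[of n T]
    by (intro pi_n_upper[OF assms(1) hypergraph_complete_layers])
      (auto simp: complete_layers_def T_def)
  moreover have "card (edge_sizes H) \<ge> 1"
    using R by (metis One_nat_def Suc_leI card_gt_0_iff empty_iff)
  then have "h_n n (complete_layers n T) = real (card (edge_sizes H)) - 1"
    using R assms(3) by (subst h_n_complete_layers) (auto simp: T_def of_nat_diff)
  ultimately show ?thesis
    by simp
qed

lemma eventually_ge_finite_nat_set:
  "finite (A :: nat set) \<Longrightarrow> \<forall>\<^sub>F n in sequentially. \<forall>k\<in>A. k \<le> n"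
proof -
  assume "finite A"
  then obtain m where "\<forall>k\<in>A. k \<le> m"
    using finite_nat_set_iff_bounded_le by blast
  then show ?thesis
    by (intro eventually_sequentiallyI[of m]) (meson order.trans)
qed

lemma eventually_pi_n_lower:
  assumes "hypergraph H" "edges H \<noteq> {}"
  shows "\<forall>\<^sub>F n in sequentially. real (card (edge_sizes H)) - 1 \<le> pi_n H n"
  using eventually_ge_finite_nat_set[OF hypergraph_finite_edge_sizes[OF assms(1)]]
  by eventually_elim (rule pi_n_lower[OF assms])

lemma subgraph_add_edges_other_sizes:
  assumes hK: "hypergraph K" and L: "\<forall>F\<in>L. card F \<notin> edge_sizes K"
    and sub: "subgraph K (verts G, edges G \<union> L)"
  shows "subgraph K G"
proof -
  obtain f where f: "inj_on f (verts K)" "f ` verts K \<subseteq> verts G"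
      "\<forall>F\<in>edges K. f ` F \<in> edges G \<union> L"
    using sub unfolding subgraph_def by (auto simp del: Un_iff)
  have "f ` F \<notin> L" if "F \<in> edges K" for F
    using card_image_edge[OF hK f(1) that] that L unfolding edge_sizes_def by auto
  then show ?thesis
    using f unfolding subgraph_def by blast
qed

text \<open>Adding to a \<open>K\<close>-free host all sets of the sizes in \<open>R(H) - R(K)\<close> keeps it \<open>H\<close>-free,
  since a copy of \<open>H\<close> would contain a copy of \<open>K\<close> using only the old edges.\<close>

lemma pi_n_subgraph_le:
  assumes hK: "hypergraph K" and eK: "edges K \<noteq> {}" and hH: "hypergraph H"
    and sub: "subgraph K H" and n: "\<forall>k\<in>edge_sizes H. k \<le> n"
  shows "pi_n K n \<le> pi_n H n - (real (card (edge_sizes H)) - real (card (edge_sizes K)))"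
proof (rule pi_n_least[OF eK])
  fix G :: "nat hg"
  assume hG: "hypergraph G" and vG: "verts G = {0..<n}"
    and sG: "edge_sizes G \<subseteq> edge_sizes K" and nsG: "\<not> subgraph K G"
  have RKH: "edge_sizes K \<subseteq> edge_sizes H"
    by (rule subgraph_edge_sizes[OF hK sub])
  have fRH: "finite (edge_sizes H)"
    by (rule hypergraph_finite_edge_sizes[OF hH])
  define T where "T = edge_sizes H - edge_sizes K"
  define L where "L = edges (complete_layers n T)"
  define G' :: "nat hg" where "G' = ({0..<n}, edges G \<union> L)"
  have sizes_G: "card F \<in> edge_sizes K" if "F \<in> edges G" for F
    using sG that unfolding edge_sizes_def by blast
  have disj: "edges G \<inter> L = {}"
    using sizes_G by (auto simp: L_def complete_layers_def T_def)
  have hG': "hypergraph G'"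
    using hG vG hypergraph_complete_layers[of n T]
    unfolding G'_def L_def hypergraph_def by simp
  have "edge_sizes G' = edge_sizes G \<union> edge_sizes (complete_layers n T)"
    by (simp add: G'_def L_def edge_sizes_def image_Un)
  then have sG': "edge_sizes G' \<subseteq> edge_sizes H"
    using sG RKH edge_sizes_complete_layers[of n T] unfolding T_def by blast
  have L_sizes: "\<forall>F\<in>L. card F \<notin> edge_sizes K"
    by (simp add: L_def complete_layers_def T_def)
  have "G' = (verts G, edges G \<union> L)"
    using vG by (simp add: G'_def)
  then have "\<not> subgraph K G'"
    using nsG subgraph_add_edges_other_sizes[OF hK L_sizes, of G] by auto
  then have nsG': "\<not> subgraph H G'"
    using subgraph_trans[OF sub] by blast
  have "h_n n G' = h_n n G + h_n n (complete_layers n T)"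
    using disj hypergraph_finite_edges[OF hG] hypergraph_finite_edges[OF hypergraph_complete_layers]
    unfolding G'_def L_def h_n_def by (simp add: sum.union_disjoint)
  also have "h_n n (complete_layers n T) = card T"
    using fRH n by (intro h_n_complete_layers) (auto simp: T_def)
  also have "card T = card (edge_sizes H) - card (edge_sizes K)"
    unfolding T_def using RKH fRH by (simp add: card_Diff_subset finite_subset)
  finally have "h_n n G' = h_n n G + (real (card (edge_sizes H)) - real (card (edge_sizes K)))"
    using RKH fRH by (simp add: card_mono of_nat_diff)
  moreover have "h_n n G' \<le> pi_n H n"
    using pi_n_upper[OF hH hG' _ sG' nsG'] by (simp add: G'_def)
  ultimately show "h_n n G \<le> pi_n H n - (real (card (edge_sizes H)) - real (card (edge_sizes K)))"
    by linarith
qed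

lemma degenerate_subgraph:
  assumes hK: "hypergraph K" and eK: "edges K \<noteq> {}" and hH: "hypergraph H"
    and sub: "subgraph K H" and dH: "degenerate H"
  shows "degenerate K"
proof -
  let ?d = "real (card (edge_sizes H)) - real (card (edge_sizes K))"
  have "(\<lambda>n. pi_n H n - ?d) \<longlonglongrightarrow> (real (card (edge_sizes H)) - 1) - ?d"
    using dH unfolding degenerate_def by (intro tendsto_diff tendsto_const)
  then have upper_lim: "(\<lambda>n. pi_n H n - ?d) \<longlonglongrightarrow> real (card (edge_sizes K)) - 1"
    by simp
  have "\<forall>\<^sub>F n in sequentially. pi_n K n \<le> pi_n H n - ?d"
    using eventually_ge_finite_nat_set[OF hypergraph_finite_edge_sizes[OF hH]]
    by eventually_elim (rule pi_n_subgraph_le[OF hK eK hH sub])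
  with eventually_pi_n_lower[OF hK eK] show ?thesis
    unfolding degenerate_def by (rule tendsto_sandwich[OF _ _ tendsto_const upper_lim])
qed

subsection \<open>Counting injections\<close>

definition injections :: "'a set \<Rightarrow> 'b set \<Rightarrow> ('a \<Rightarrow> 'b) set" where
  "injections V X = {\<phi> \<in> V \<rightarrow>\<^sub>E X. inj_on \<phi> V}"

lemma finite_injections: "finite V \<Longrightarrow> finite X \<Longrightarrow> finite (injections V X)"
  unfolding injections_def by (simp add: finite_PiE)

lemma injections_nonempty:
  assumes "finite V" "finite X" "card V \<le> card X"
  shows "injections V X \<noteq> {}"
proof -
  obtain f where "f ` V \<subseteq> X" "inj_on f V"
    using card_le_inj[OF assms] by blast
  then have "restrict f V \<in> injections V X"
    unfolding injections_def by (auto simp: inj_on_def)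
  then show ?thesis
    by blast
qed

lemma card_image_injection:
  "\<phi> \<in> injections V X \<Longrightarrow> A \<subseteq> V \<Longrightarrow> card (\<phi> ` A) = card A"
  unfolding injections_def by (auto intro: card_image inj_on_subset)

lemma image_injection_subset: "\<phi> \<in> injections V X \<Longrightarrow> A \<subseteq> V \<Longrightarrow> \<phi> ` A \<subseteq> X"
  unfolding injections_def by auto

lemma permutation_mapping_set:
  assumes "finite X" "S \<subseteq> X" "T \<subseteq> X" "card S = card T"
  shows "\<exists>\<pi>. bij_betw \<pi> X X \<and> \<pi> ` S = T"
proof -
  have fin: "finite S" "finite T"
    using assms finite_subset by auto
  obtain g where g: "bij_betw g S T"
    using finite_same_card_bij[OF fin assms(4)] by blast
  have "card (X - S) = card (X - T)"
    using assms fin by (simp add: card_Diff_subset)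
  then obtain h where h: "bij_betw h (X - S) (X - T)"
    using finite_same_card_bij assms(1) by blast
  define \<pi> where "\<pi> x = (if x \<in> S then g x else h x)" for x
  have "bij_betw \<pi> S T"
    using g by (rule bij_betw_cong[THEN iffD1, rotated]) (simp add: \<pi>_def)
  moreover have "bij_betw \<pi> (X - S) (X - T)"
    using h by (rule bij_betw_cong[THEN iffD1, rotated]) (simp add: \<pi>_def)
  ultimately have "bij_betw \<pi> (S \<union> (X - S)) (T \<union> (X - T))"
    by (rule bij_betw_combine) blast
  moreover have "S \<union> (X - S) = X" "T \<union> (X - T) = X"
    using assms by auto
  ultimately show ?thesis
    using \<open>bij_betw \<pi> S T\<close> by (auto simp: bij_betw_def)
qed

text \<open>Composing with a permutation of \<open>X\<close> that maps \<open>S\<close> to \<open>T\<close> injects the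
  injections sending \<open>A\<close> onto \<open>S\<close> into those sending \<open>A\<close> onto \<open>T\<close>.\<close>

lemma card_injections_onto_le:
  assumes V: "finite V" and X: "finite X" and A: "A \<subseteq> V"
    and S: "S \<subseteq> X" and T: "T \<subseteq> X" and c: "card S = card T"
  shows "card {\<phi> \<in> injections V X. \<phi> ` A = S} \<le> card {\<phi> \<in> injections V X. \<phi> ` A = T}"
proof -
  obtain \<pi> where \<pi>: "bij_betw \<pi> X X" "\<pi> ` S = T"
    using permutation_mapping_set[OF X S T c] by blast
  define \<Phi> where "\<Phi> \<phi> = restrict (\<pi> \<circ> \<phi>) V" for \<phi> :: "'a \<Rightarrow> 'b"
  have "inj_on \<Phi> (injections V X)"
  proof
    fix \<phi>1 \<phi>2
    assume m: "\<phi>1 \<in> injections V X" "\<phi>2 \<in> injections V X" and e: "\<Phi> \<phi>1 = \<Phi> \<phi>2"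
    have "\<phi>1 u = \<phi>2 u" if "u \<in> V" for u
    proof -
      have "\<pi> (\<phi>1 u) = \<pi> (\<phi>2 u)"
        using fun_cong[OF e, of u] that by (simp add: \<Phi>_def)
      moreover have "\<phi>1 u \<in> X" "\<phi>2 u \<in> X"
        using m that unfolding injections_def by auto
      ultimately show ?thesis
        using \<pi>(1) by (meson bij_betw_def inj_onD)
    qed
    then show "\<phi>1 = \<phi>2"
      using m unfolding injections_def by (auto intro: PiE_ext)
  qed
  moreover have "\<Phi> \<phi> \<in> {\<phi> \<in> injections V X. \<phi> ` A = T}"
    if \<phi>: "\<phi> \<in> injections V X" "\<phi> ` A = S" for \<phi>
  proof -
    have "\<phi> ` V \<subseteq> X" "inj_on \<phi> V"
      using \<phi>(1) unfolding injections_def by auto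
    then have "inj_on (\<pi> \<circ> \<phi>) V" "(\<pi> \<circ> \<phi>) ` V \<subseteq> X"
      using \<pi>(1) by (auto simp: bij_betw_def intro: comp_inj_on inj_on_subset)
    then have "\<Phi> \<phi> \<in> injections V X"
      unfolding injections_def \<Phi>_def by (auto simp: inj_on_def)
    moreover have "\<Phi> \<phi> ` A = T"
      using \<phi>(2) \<pi>(2) A unfolding \<Phi>_def by (auto simp: image_comp[symmetric] subset_iff)
    ultimately show ?thesis
      by blast
  qed
  ultimately show ?thesis
    using finite_injections[OF V X] by (intro card_inj_on_le[where f = \<Phi>]) (auto intro: inj_on_subset)
qed

lemma card_injections_onto_eq:
  assumes "finite V" "finite X" "A \<subseteq> V" "S \<subseteq> X" "T \<subseteq> X" "card S = card T"
  shows "card {\<phi> \<in> injections V X. \<phi> ` A = S} = card {\<phi> \<in> injections V X. \<phi> ` A = T}"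
  using card_injections_onto_le[OF assms] card_injections_onto_le[OF assms(1-3,5,4) assms(6)[symmetric]]
  by linarith

text \<open>The image of a fixed \<open>k\<close>-set under a uniformly random injection is a uniformly random
  \<open>k\<close>-subset of \<open>X\<close>.\<close>

lemma card_injections_image_in:
  assumes V: "finite V" and X: "finite X" and A: "A \<subseteq> V"
    and E: "E \<subseteq> {S. S \<subseteq> X \<and> card S = card A}"
  shows "card {\<phi> \<in> injections V X. \<phi> ` A \<in> E} * (card X choose card A)
    = card E * card (injections V X)"
proof -
  define K where "K = {S. S \<subseteq> X \<and> card S = card A}"
  define onto where "onto S = {\<phi> \<in> injections V X. \<phi> ` A = S}" for S
  have finK: "finite K"
    unfolding K_def using X by simp
  have count: "card {\<phi> \<in> injections V X. \<phi> ` A \<in> E'} = (\<Sum>S\<in>E'. card (onto S))"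
    if "E' \<subseteq> K" for E'
  proof -
    have "{\<phi> \<in> injections V X. \<phi> ` A \<in> E'} = (\<Union>S\<in>E'. onto S)"
      unfolding onto_def by auto
    moreover have "finite E'"
      using finK that by (rule finite_subset[rotated])
    moreover have "card (\<Union>S\<in>E'. onto S) = (\<Sum>S\<in>E'. card (onto S))"
      using \<open>finite E'\<close> finite_injections[OF V X]
      by (intro card_UN_disjoint) (auto simp: onto_def)
    ultimately show ?thesis
      by simp
  qed
  have "{\<phi> \<in> injections V X. \<phi> ` A \<in> K} = injections V X"
    using A card_image_injection image_injection_subset unfolding K_def by blast
  then have all: "card (injections V X) = (\<Sum>T\<in>K. card (onto T))"
    using count[of K] by simp
  have uniform: "card (onto S) * card K = card (injections V X)" if "S \<in> K" for S
  proof -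
    have "card (onto S) * card K = (\<Sum>T\<in>K. card (onto S))"
      by simp
    also have "\<dots> = (\<Sum>T\<in>K. card (onto T))"
      using that unfolding onto_def K_def
      by (intro sum.cong refl card_injections_onto_eq[OF V X A]) auto
    finally show ?thesis
      using all by simp
  qed
  have "card {\<phi> \<in> injections V X. \<phi> ` A \<in> E} * card K = (\<Sum>S\<in>E. card (onto S) * card K)"
    using count[of E] E by (simp add: K_def sum_distrib_right)
  also have "\<dots> = (\<Sum>S\<in>E. card (injections V X))"
    using E uniform unfolding K_def by (intro sum.cong refl) blast
  finally show ?thesis
    using n_subsets[OF X] by (simp add: K_def)
qed

subsection \<open>Flags\<close>

lemma card_injections_edge_into:
  assumes hG: "hypergraph G" and vG: "verts G = {0..<n}" and V: "finite V" "card V \<le> n"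
    and F: "F \<subseteq> V"
  shows "real (card {\<phi> \<in> injections V {0..<n}. \<phi> ` F \<in> edges G})
    = real (card (injections V {0..<n}))
      * (real (card {E\<in>edges G. card E = card F}) / real (n choose card F))"
proof -
  have "{\<phi> \<in> injections V {0..<n}. \<phi> ` F \<in> edges G}
      = {\<phi> \<in> injections V {0..<n}. \<phi> ` F \<in> {E\<in>edges G. card E = card F}}"
    using card_image_injection[OF _ F] by auto
  moreover have "{E\<in>edges G. card E = card F} \<subseteq> {S. S \<subseteq> {0..<n} \<and> card S = card F}"
    using hypergraph_edge_subset[OF hG] vG by auto
  ultimately have "card {\<phi> \<in> injections V {0..<n}. \<phi> ` F \<in> edges G} * (n choose card F)
      = card {E\<in>edges G. card E = card F} * card (injections V {0..<n})"
    using card_injections_image_in[OF V(1) _ F, of "{0..<n}"] by (simp del: mem_Collect_eq)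
  moreover have "n choose card F > 0"
    using card_mono[OF V(1) F] V(2) by simp
  ultimately show ?thesis
    by (simp add: field_simps flip: of_nat_mult)
qed

text \<open>Each injection \<open>verts H \<rightarrow> {0..<n}\<close> misses some edge of \<open>H\<close>, and a fixed edge \<open>F\<close> is
  mapped into \<open>G\<close> by the proportion \<open>|G\<^sub>|\<^sub>F\<^sub>|| / (n choose |F|)\<close> of them.\<close>

lemma embedding_density_bound:
  assumes hH: "hypergraph H" and hG: "hypergraph G" and vG: "verts G = {0..<n}"
    and n: "card (verts H) \<le> n" and ns: "\<not> subgraph H G"
  shows "(\<Sum>F\<in>edges H. real (card {E\<in>edges G. card E = card F}) / real (n choose card F))
    \<le> real (card (edges H)) - 1"
proof -
  define I where "I = injections (verts H) {0..<n}"
  define m where "m = card I"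
  define Hit where "Hit F = {\<phi>\<in>I. \<phi> ` F \<in> edges G}" for F
  have fV: "finite (verts H)" and fE: "finite (edges H)"
    using hypergraph_finite_verts[OF hH] hypergraph_finite_edges[OF hH] .
  have fI: "finite I"
    unfolding I_def by (simp add: finite_injections[OF fV])
  have "m > 0"
    using injections_nonempty[OF fV, of "{0..<n}"] fI n unfolding m_def I_def
    by (simp add: card_gt_0_iff)
  have "I \<subseteq> (\<Union>F\<in>edges H. I - Hit F)"
  proof
    fix \<phi> assume \<phi>: "\<phi> \<in> I"
    have "inj_on \<phi> (verts H)" "\<phi> ` verts H \<subseteq> verts G"
      using \<phi> vG unfolding I_def injections_def by auto
    then have "\<not> (\<forall>F\<in>edges H. \<phi> ` F \<in> edges G)"
      using ns unfolding subgraph_def by blast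
    then show "\<phi> \<in> (\<Union>F\<in>edges H. I - Hit F)"
      using \<phi> unfolding Hit_def by blast
  qed
  then have "m \<le> card (\<Union>F\<in>edges H. I - Hit F)"
    unfolding m_def using fI fE by (intro card_mono) auto
  also have "\<dots> \<le> (\<Sum>F\<in>edges H. card (I - Hit F))"
    by (rule card_UN_le[OF fE])
  also have "\<dots> = (\<Sum>F\<in>edges H. m - card (Hit F))"
    unfolding m_def Hit_def using fI by (intro sum.cong refl card_Diff_subset) auto
  finally have "real m \<le> real (\<Sum>F\<in>edges H. m - card (Hit F))"
    by (simp only: of_nat_le_iff)
  also have "\<dots> = (\<Sum>F\<in>edges H. real m - real (card (Hit F)))"
    using card_mono[OF fI] unfolding m_def Hit_def by (simp add: of_nat_diff)
  also have "\<dots> = real m * real (card (edges H))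
      - real m * (\<Sum>F\<in>edges H. real (card {E\<in>edges G. card E = card F}) / real (n choose card F))"
    using card_injections_edge_into[OF hG vG fV n hypergraph_edge_subset[OF hH]]
    unfolding m_def Hit_def I_def by (simp add: sum_subtractf sum_distrib_left)
  finally have "real m * (\<Sum>F\<in>edges H. real (card {E\<in>edges G. card E = card F}) / real (n choose card F))
      \<le> real m * (real (card (edges H)) - 1)"
    by (simp only: right_diff_distrib mult_1_right)
  then show ?thesis
    by (rule mult_left_le_imp_le) (use \<open>m > 0\<close> in simp)
qed

lemma inj_on_card_edges_flag: "flag H \<Longrightarrow> inj_on card (edges H)"
  unfolding flag_def edge_sizes_def inj_on_def by blast

lemma card_edges_flag: "flag H \<Longrightarrow> card (edges H) = card (edge_sizes H)"
  unfolding edge_sizes_def by (simp add: card_image inj_on_card_edges_flag)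

lemma h_n_flag:
  assumes "hypergraph H" "flag H" "finite (edges G)" "edge_sizes G \<subseteq> edge_sizes H"
  shows "h_n n G = (\<Sum>F\<in>edges H. real (card {E\<in>edges G. card E = card F}) / real (n choose card F))"
proof -
  have "inj_on card (edges H)"
    by (rule inj_on_card_edges_flag[OF assms(2)])
  then show ?thesis
    using assms(1,3,4) hypergraph_finite_edge_sizes[OF assms(1)]
    by (subst h_n_by_size[where T = "edge_sizes H"]) (simp_all add: edge_sizes_def sum.reindex)
qed

lemma degenerate_flag:
  assumes hH: "hypergraph H" and fl: "flag H" and eH: "edges H \<noteq> {}"
  shows "degenerate H"
proof -
  have "pi_n H n \<le> real (card (edge_sizes H)) - 1" if n: "card (verts H) \<le> n" for n
  proof (rule pi_n_least[OF eH])
    fix G :: "nat hg"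
    assume hG: "hypergraph G" "verts G = {0..<n}" "edge_sizes G \<subseteq> edge_sizes H" "\<not> subgraph H G"
    have "h_n n G = (\<Sum>F\<in>edges H. real (card {E\<in>edges G. card E = card F}) / real (n choose card F))"
      using hG by (intro h_n_flag[OF hH fl] hypergraph_finite_edges)
    also have "\<dots> \<le> real (card (edges H)) - 1"
      using hG by (intro embedding_density_bound[OF hH _ _ n])
    finally show "h_n n G \<le> real (card (edge_sizes H)) - 1"
      by (simp add: card_edges_flag[OF fl])
  qed
  then have "\<forall>\<^sub>F n in sequentially. pi_n H n \<le> real (card (edge_sizes H)) - 1"
    by (rule eventually_sequentiallyI)
  with eventually_pi_n_lower[OF hH eH] show ?thesis
    unfolding degenerate_def by (rule tendsto_sandwich[OF _ _ tendsto_const tendsto_const])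
qed

subsection \<open>Averaging over induced subhypergraphs\<close>

definition induced :: "'a hg \<Rightarrow> 'a set \<Rightarrow> 'a hg" where
  "induced G S = (S, {F\<in>edges G. F \<subseteq> S})"

lemma verts_induced [simp]: "verts (induced G S) = S"
  by (simp add: induced_def)

lemma edges_induced [simp]: "edges (induced G S) = {F\<in>edges G. F \<subseteq> S}"
  by (simp add: induced_def)

lemma hypergraph_induced: "hypergraph G \<Longrightarrow> finite S \<Longrightarrow> hypergraph (induced G S)"
  unfolding hypergraph_def by auto

lemma edge_sizes_induced: "edge_sizes (induced G S) \<subseteq> edge_sizes G"
  unfolding edge_sizes_def by auto

lemma card_supersets:
  assumes F: "F \<subseteq> X" and X: "finite X" and m: "card F \<le> m"
  shows "card {S. S \<subseteq> X \<and> card S = m \<and> F \<subseteq> S} = (card X - card F) choose (m - card F)"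
proof -
  let ?L = "{S. S \<subseteq> X \<and> card S = m \<and> F \<subseteq> S}"
  let ?T = "{T. T \<subseteq> X - F \<and> card T = m - card F}"
  have fF: "finite F"
    using F X finite_subset by auto
  have "bij_betw (\<lambda>S. S - F) ?L ?T"
  proof (rule bij_betw_byWitness[where f' = "\<lambda>T. T \<union> F"])
    show "(\<lambda>S. S - F) ` ?L \<subseteq> ?T"
      using X fF by (auto simp: card_Diff_subset finite_subset)
    show "(\<lambda>T. T \<union> F) ` ?T \<subseteq> ?L"
    proof
      fix S assume "S \<in> (\<lambda>T. T \<union> F) ` ?T"
      then obtain T where T: "T \<subseteq> X - F" "card T = m - card F" "S = T \<union> F"
        by blast
      moreover have "finite T"
        using T(1) X by (meson finite_Diff finite_subset)
      moreover have "T \<inter> F = {}"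
        using T(1) by blast
      ultimately have "card S = card T + card F"
        unfolding T(3) using fF by (intro card_Un_disjoint)
      then show "S \<in> ?L"
        using T F m by auto
    qed
  qed auto
  then have "card ?L = card ?T"
    by (rule bij_betw_same_card)
  also have "\<dots> = card (X - F) choose (m - card F)"
    using X by (simp add: n_subsets)
  finally show ?thesis
    using F fF by (simp add: card_Diff_subset)
qed

lemma choose_ratio:
  assumes "k \<le> m" "m \<le> n"
  shows "real ((n - k) choose (m - k)) / real (m choose k) = real (n choose m) / real (n choose k)"
proof -
  have "real (n choose m) * real (m choose k) = real (n choose k) * real ((n - k) choose (m - k))"
    using choose_mult[OF assms] by (metis of_nat_mult)
  moreover have "real (m choose k) > 0" "real (n choose k) > 0"
    using assms by auto
  ultimately show ?thesis
    by (simp add: field_simps)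
qed

text \<open>Double counting of pairs (edge \<open>F\<close>, \<open>m\<close>-set \<open>S \<supseteq> F\<close>).\<close>

lemma sum_h_n_induced:
  assumes hG: "hypergraph G" and n: "card (verts G) = n" and mn: "m \<le> n"
    and sz: "\<forall>F\<in>edges G. card F \<le> m"
  shows "(\<Sum>S | S \<subseteq> verts G \<and> card S = m. h_n m (induced G S)) = real (n choose m) * h_n n G"
proof -
  let ?M = "{S. S \<subseteq> verts G \<and> card S = m}"
  have fX: "finite (verts G)"
    by (rule hypergraph_finite_verts[OF hG])
  have fE: "finite (edges G)"
    by (rule hypergraph_finite_edges[OF hG])
  have "(\<Sum>S\<in>?M. h_n m (induced G S))
      = (\<Sum>S\<in>?M. \<Sum>F\<in>edges G. if F \<subseteq> S then 1 / real (m choose card F) else 0)"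
    unfolding h_n_def by (simp add: sum.inter_filter[OF fE])
  also have "\<dots> = (\<Sum>F\<in>edges G. \<Sum>S\<in>?M. if F \<subseteq> S then 1 / real (m choose card F) else 0)"
    by (rule sum.swap)
  also have "\<dots> = (\<Sum>F\<in>edges G. real (n choose m) / real (n choose card F))"
  proof (intro sum.cong refl)
    fix F assume F: "F \<in> edges G"
    have FX: "F \<subseteq> verts G" and km: "card F \<le> m"
      using hypergraph_edge_subset[OF hG F] sz F by auto
    have "{S\<in>?M. F \<subseteq> S} = {S. S \<subseteq> verts G \<and> card S = m \<and> F \<subseteq> S}"
      by auto
    then have "card {S\<in>?M. F \<subseteq> S} = (n - card F) choose (m - card F)"
      using card_supersets[OF FX fX km] n by simp
    then have "(\<Sum>S\<in>?M. if F \<subseteq> S then 1 / real (m choose card F) else 0)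
        = real ((n - card F) choose (m - card F)) / real (m choose card F)"
      using fX by (simp add: sum.inter_filter[symmetric])
    then show "(\<Sum>S\<in>?M. if F \<subseteq> S then 1 / real (m choose card F) else 0)
        = real (n choose m) / real (n choose card F)"
      using choose_ratio[OF km mn] by simp
  qed
  also have "\<dots> = real (n choose m) * h_n n G"
    unfolding h_n_def by (simp add: sum_distrib_left)
  finally show ?thesis .
qed

definition relabel :: "('a \<Rightarrow> 'b) \<Rightarrow> 'a hg \<Rightarrow> 'b hg" where
  "relabel \<alpha> G = (\<alpha> ` verts G, image \<alpha> ` edges G)"

lemma verts_relabel [simp]: "verts (relabel \<alpha> G) = \<alpha> ` verts G"
  by (simp add: relabel_def)

lemma edges_relabel [simp]: "edges (relabel \<alpha> G) = image \<alpha> ` edges G"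
  by (simp add: relabel_def)

lemma hypergraph_relabel: "hypergraph G \<Longrightarrow> hypergraph (relabel \<alpha> G)"
  unfolding hypergraph_def by auto

lemma edge_sizes_relabel:
  assumes "hypergraph G" "inj_on \<alpha> (verts G)"
  shows "edge_sizes (relabel \<alpha> G) = edge_sizes G"
  using card_image_edge[OF assms] unfolding edge_sizes_def by (auto simp: image_comp)

lemma h_n_relabel:
  assumes "hypergraph G" "inj_on \<alpha> (verts G)"
  shows "h_n n (relabel \<alpha> G) = h_n n G"
proof -
  have "inj_on (image \<alpha>) (edges G)"
    using assms unfolding hypergraph_def by (meson inj_on_image_Pow inj_on_subset)
  then show ?thesis
    unfolding h_n_def using card_image_edge[OF assms] by (simp add: sum.reindex)
qed

lemma relabel_subgraph:
  assumes "hypergraph G" "inj_on \<alpha> (verts G)"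
  shows "subgraph (relabel \<alpha> G) G"
proof -
  let ?\<beta> = "inv_into (verts G) \<alpha>"
  have "?\<beta> ` (\<alpha> ` F) = F" if "F \<in> edges G" for F
    using assms(2) hypergraph_edge_subset[OF assms(1) that] by simp
  then have "\<forall>F\<in>edges (relabel \<alpha> G). ?\<beta> ` F \<in> edges G"
    by auto
  moreover have "inj_on ?\<beta> (\<alpha> ` verts G)" "?\<beta> ` \<alpha> ` verts G \<subseteq> verts G"
    using assms(2) by (auto simp: inj_on_inv_into)
  ultimately show ?thesis
    unfolding subgraph_def by auto
qed

text \<open>The hosts in the definition of \<open>pi_n\<close> live on \<open>{0..<n}\<close>; any \<open>n\<close>-vertex host is
  isomorphic to one of them.\<close>

lemma pi_n_upper_card:
  fixes G :: "'b hg"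
  assumes hH: "hypergraph H" and hG: "hypergraph G" and n: "card (verts G) = n"
    and sG: "edge_sizes G \<subseteq> edge_sizes H" and ns: "\<not> subgraph H G"
  shows "h_n n G \<le> pi_n H n"
proof -
  obtain \<alpha> where \<alpha>: "bij_betw \<alpha> (verts G) {0..<n}"
    using ex_bij_betw_finite_nat[OF hypergraph_finite_verts[OF hG]] n by blast
  then have inj: "inj_on \<alpha> (verts G)"
    by (rule bij_betw_imp_inj_on)
  have "\<not> subgraph H (relabel \<alpha> G)"
    using ns subgraph_trans relabel_subgraph[OF hG inj] by blast
  then have "h_n n (relabel \<alpha> G) \<le> pi_n H n"
    using \<alpha> sG by (intro pi_n_upper[OF hH hypergraph_relabel[OF hG]])
      (auto simp: bij_betw_def edge_sizes_relabel[OF hG inj])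
  then show ?thesis
    by (simp add: h_n_relabel[OF hG inj])
qed

subsection \<open>Supersaturation\<close>

text \<open>\<open>h_n n G\<close> is the average of \<open>h_m\<close> over the induced \<open>m\<close>-vertex subhypergraphs; those without a
  copy of \<open>H\<close> contribute at most \<open>pi_n H m\<close>, the others at most \<open>|R(H)|\<close>.\<close>

lemma supersaturation_sets:
  fixes G :: "'b hg"
  assumes hH: "hypergraph H" and d0: "0 \<le> \<delta>" and mR: "\<forall>k\<in>edge_sizes H. k \<le> m"
    and piH: "pi_n H m \<le> real (card (edge_sizes H)) - 1 + \<delta>"
    and hG: "hypergraph G" and n: "card (verts G) = n" and mn: "m \<le> n"
    and sG: "edge_sizes G \<subseteq> edge_sizes H"
    and dense: "h_n n G > real (card (edge_sizes H)) - 1 + 2 * \<delta>"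
  shows "\<delta> * real (n choose m)
    < real (card {S. S \<subseteq> verts G \<and> card S = m \<and> subgraph H (induced G S)})"
proof -
  define r where "r = real (card (edge_sizes H))"
  define M where "M = {S. S \<subseteq> verts G \<and> card S = m}"
  define Good where "Good = {S\<in>M. subgraph H (induced G S)}"
  have fM: "finite M"
    unfolding M_def using hypergraph_finite_verts[OF hG] by simp
  have GoodM: "Good \<subseteq> M"
    unfolding Good_def by blast
  have cM: "card M = n choose m"
    unfolding M_def using n_subsets[OF hypergraph_finite_verts[OF hG]] n by simp
  have induced_S: "hypergraph (induced G S)" "card (verts (induced G S)) = m"
    "edge_sizes (induced G S) \<subseteq> edge_sizes H" if "S \<in> M" for S
    using that hypergraph_induced[OF hG] edge_sizes_induced[of G S] sG
    unfolding M_def by (auto intro: finite_subset[OF _ hypergraph_finite_verts[OF hG]])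
  have "h_n m (induced G S) \<le> r" if "S \<in> M" for S
  proof -
    have "h_n m (induced G S) \<le> card (edge_sizes (induced G S))"
      using h_n_le_card_edge_sizes induced_S[OF that] by blast
    also have "\<dots> \<le> r"
      unfolding r_def using induced_S[OF that] hypergraph_finite_edge_sizes[OF hH] by (simp add: card_mono)
    finally show ?thesis .
  qed
  moreover have "h_n m (induced G S) \<le> r - 1 + \<delta>" if "S \<in> M - Good" for S
    using pi_n_upper_card[OF hH induced_S] piH that unfolding Good_def r_def by fastforce
  ultimately have split_bound: "(\<Sum>S\<in>Good. h_n m (induced G S)) + (\<Sum>S\<in>M - Good. h_n m (induced G S))
      \<le> (\<Sum>S\<in>Good. r) + (\<Sum>S\<in>M - Good. r - 1 + \<delta>)"
    using GoodM by (intro add_mono sum_mono) auto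
  have "\<forall>F\<in>edges G. card F \<le> m"
    using sG mR unfolding edge_sizes_def by auto
  then have "real (n choose m) * h_n n G = (\<Sum>S\<in>M. h_n m (induced G S))"
    using sum_h_n_induced[OF hG n mn] unfolding M_def by simp
  also have "\<dots> = (\<Sum>S\<in>Good. h_n m (induced G S)) + (\<Sum>S\<in>M - Good. h_n m (induced G S))"
    by (simp only: sum.subset_diff[OF GoodM fM] add.commute)
  also have "\<dots> \<le> (\<Sum>S\<in>Good. r) + (\<Sum>S\<in>M - Good. r - 1 + \<delta>)"
    by (rule split_bound)
  also have "\<dots> = real (card Good) * r + (real (n choose m) - real (card Good)) * (r - 1 + \<delta>)"
    using card_Diff_subset[OF finite_subset[OF GoodM fM] GoodM] card_mono[OF fM GoodM] cM
    by simp
  finally have "real (n choose m) * h_n n G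
      \<le> real (card Good) * r + (real (n choose m) - real (card Good)) * (r - 1 + \<delta>)" .
  moreover have "real (n choose m) * (r - 1 + 2 * \<delta>) < real (n choose m) * h_n n G"
    using dense mn unfolding r_def by simp
  ultimately have "real (n choose m) * \<delta> < real (card Good) * (1 - \<delta>)"
    by (simp add: algebra_simps)
  also have "\<dots> \<le> real (card Good)"
    using d0 by (simp add: mult_left_le)
  finally show ?thesis
    unfolding Good_def M_def by (simp add: mult.commute)
qed

definition embeddings :: "'a hg \<Rightarrow> 'b hg \<Rightarrow> ('a \<Rightarrow> 'b) set" where
  "embeddings H G = {\<phi> \<in> injections (verts H) (verts G). \<forall>F\<in>edges H. \<phi> ` F \<in> edges G}"

lemma embedding_if_subgraph_induced:
  assumes hH: "hypergraph H" and S: "S \<subseteq> verts G" and sub: "subgraph H (induced G S)"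
  shows "\<exists>\<phi>\<in>embeddings H G. \<phi> ` verts H \<subseteq> S"
proof -
  obtain f where f: "inj_on f (verts H)" "f ` verts H \<subseteq> S" "\<forall>F\<in>edges H. f ` F \<in> edges G"
    using sub unfolding subgraph_def by auto
  have "restrict f (verts H) ` F = f ` F" if "F \<subseteq> verts H" for F
    using that by auto
  then have "restrict f (verts H) \<in> embeddings H G"
    using f S hypergraph_edge_subset[OF hH]
    unfolding embeddings_def injections_def by (auto simp: inj_on_def)
  moreover have "restrict f (verts H) ` verts H \<subseteq> S"
    using f(2) by auto
  ultimately show ?thesis
    by blast
qed

text \<open>An \<open>m\<close>-set inducing a copy of \<open>H\<close> contains the image of an embedding; each image lies in
  \<open>(n - v) choose (m - v)\<close> such sets.\<close>

lemma card_sets_inducing_copy_le: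
  fixes G :: "'b hg"
  assumes hH: "hypergraph H" and hG: "hypergraph G" and n: "card (verts G) = n"
    and vm: "card (verts H) \<le> m"
  shows "card {S. S \<subseteq> verts G \<and> card S = m \<and> subgraph H (induced G S)}
    \<le> card (embeddings H G) * ((n - card (verts H)) choose (m - card (verts H)))"
proof -
  define Sup where "Sup \<phi> = {S. S \<subseteq> verts G \<and> card S = m \<and> \<phi> ` verts H \<subseteq> S}" for \<phi>
  have fX: "finite (verts G)"
    by (rule hypergraph_finite_verts[OF hG])
  have fEmb: "finite (embeddings H G)"
    unfolding embeddings_def using finite_injections[OF hypergraph_finite_verts[OF hH] fX] by simp
  have "{S. S \<subseteq> verts G \<and> card S = m \<and> subgraph H (induced G S)} \<subseteq> (\<Union>\<phi>\<in>embeddings H G. Sup \<phi>)"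
  proof
    fix S assume "S \<in> {S. S \<subseteq> verts G \<and> card S = m \<and> subgraph H (induced G S)}"
    then have S: "S \<subseteq> verts G" "card S = m" "subgraph H (induced G S)"
      by auto
    then obtain \<phi> where "\<phi> \<in> embeddings H G" "\<phi> ` verts H \<subseteq> S"
      using embedding_if_subgraph_induced[OF hH] by blast
    then show "S \<in> (\<Union>\<phi>\<in>embeddings H G. Sup \<phi>)"
      using S unfolding Sup_def by blast
  qed
  then have "card {S. S \<subseteq> verts G \<and> card S = m \<and> subgraph H (induced G S)}
      \<le> card (\<Union>\<phi>\<in>embeddings H G. Sup \<phi>)"
    using fEmb fX by (intro card_mono) (auto simp: Sup_def)
  also have "\<dots> \<le> (\<Sum>\<phi>\<in>embeddings H G. card (Sup \<phi>))"
    by (rule card_UN_le[OF fEmb])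
  also have "\<dots> = (\<Sum>\<phi>\<in>embeddings H G. (n - card (verts H)) choose (m - card (verts H)))"
  proof (intro sum.cong refl)
    fix \<phi> assume "\<phi> \<in> embeddings H G"
    then have "\<phi> \<in> injections (verts H) (verts G)"
      unfolding embeddings_def by blast
    then show "card (Sup \<phi>) = (n - card (verts H)) choose (m - card (verts H))"
      unfolding Sup_def using card_supersets[OF _ fX, of "\<phi> ` verts H" m] vm n
      by (simp add: card_image_injection image_injection_subset)
  qed
  finally show ?thesis
    by simp
qed

subsection \<open>Cloning a vertex\<close>

definition clone_vertex :: "'a hg \<Rightarrow> 'a \<Rightarrow> 'a \<Rightarrow> 'a hg" where
  "clone_vertex H x y = (insert y (verts H), edges H \<union> {insert y (F - {x}) | F. F \<in> edges H \<and> x \<in> F})"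

lemma verts_clone_vertex [simp]: "verts (clone_vertex H x y) = insert y (verts H)"
  by (simp add: clone_vertex_def)

lemma edges_clone_vertex [simp]:
  "edges (clone_vertex H x y) = edges H \<union> {insert y (F - {x}) | F. F \<in> edges H \<and> x \<in> F}"
  by (simp add: clone_vertex_def)

lemma hypergraph_clone_vertex: "hypergraph H \<Longrightarrow> hypergraph (clone_vertex H x y)"
  unfolding hypergraph_def by auto

lemma edge_sizes_clone_vertex:
  assumes hH: "hypergraph H" and y: "y \<notin> verts H"
  shows "edge_sizes (clone_vertex H x y) = edge_sizes H"
proof -
  have "card (insert y (F - {x})) = card F" if F: "F \<in> edges H" "x \<in> F" for F
  proof -
    have "finite F" "y \<notin> F"
      using hypergraph_edge_subset[OF hH F(1)] hypergraph_finite_verts[OF hH] y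
      by (auto intro: finite_subset)
    moreover have "card F > 0"
      using \<open>finite F\<close> F(2) card_gt_0_iff by blast
    ultimately show ?thesis
      using F(2) by (simp add: card_insert_disjoint card_Diff_singleton)
  qed
  then have "card ` {insert y (F - {x}) | F. F \<in> edges H \<and> x \<in> F} \<subseteq> card ` edges H"
    by force
  then show ?thesis
    unfolding edge_sizes_def by (auto simp: image_Un)
qed

lemma value_at_changed_point_notin_image:
  assumes inj: "inj_on \<phi>2 V" and x: "x \<in> V" and differ: "\<phi>1 x \<noteq> \<phi>2 x"
    and agree: "\<forall>u\<in>V - {x}. \<phi>1 u = \<phi>2 u"
  shows "\<phi>2 x \<notin> \<phi>1 ` V"
proof
  assume "\<phi>2 x \<in> \<phi>1 ` V"
  then obtain u where u: "u \<in> V" "\<phi>2 x = \<phi>1 u"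
    by blast
  with differ have "u \<noteq> x"
    by auto
  with u agree have "\<phi>2 x = \<phi>2 u"
    by auto
  then have "x = u"
    by (rule inj_onD[OF inj _ x u(1)])
  with \<open>u \<noteq> x\<close> show False
    by simp
qed

lemma subgraph_clone_vertex:
  assumes hH: "hypergraph H" and x: "x \<in> verts H" and y: "y \<notin> verts H"
    and \<phi>1: "\<phi>1 \<in> embeddings H G" and \<phi>2: "\<phi>2 \<in> embeddings H G"
    and differ: "\<phi>1 x \<noteq> \<phi>2 x" and agree: "\<forall>u\<in>verts H - {x}. \<phi>1 u = \<phi>2 u"
  shows "subgraph (clone_vertex H x y) G"
proof -
  define f where "f = \<phi>1(y := \<phi>2 x)"
  have inj1: "inj_on \<phi>1 (verts H)" and inj2: "inj_on \<phi>2 (verts H)"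
    using \<phi>1 \<phi>2 unfolding embeddings_def injections_def by auto
  have f_y: "f y = \<phi>2 x"
    by (simp add: f_def)
  have f_on_H: "f u = \<phi>1 u" if "u \<in> verts H" for u
    using that y unfolding f_def by auto
  then have f_image: "f ` F = \<phi>1 ` F" if "F \<subseteq> verts H" for F
    using that by (simp add: subset_eq)
  have "\<phi>2 x \<notin> \<phi>1 ` verts H"
    using inj2 x differ agree by (rule value_at_changed_point_notin_image)
  then have "f y \<notin> f ` (verts H - {y})"
    using y f_y f_image[of "verts H"] by simp
  moreover have "inj_on f (verts H)"
    using inj1 f_on_H inj_on_cong by blast
  ultimately have "inj_on f (insert y (verts H))"
    using inj_on_insert by blast
  moreover have "f ` insert y (verts H) \<subseteq> verts G"
  proof -
    have "\<phi>1 ` verts H \<subseteq> verts G" "\<phi>2 ` verts H \<subseteq> verts G"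
      using \<phi>1 \<phi>2 image_injection_subset[of _ "verts H" "verts G" "verts H"]
      unfolding embeddings_def by auto
    then show ?thesis
      using x f_y f_image[of "verts H"] by auto
  qed
  moreover have "f ` E \<in> edges G" if E: "E \<in> edges (clone_vertex H x y)" for E
  proof -
    consider (old) "E \<in> edges H" | (new) F where "F \<in> edges H" "x \<in> F" "E = insert y (F - {x})"
      using E by auto
    then show ?thesis
    proof cases
      case old
      then show ?thesis
        using \<phi>1 f_image[OF hypergraph_edge_subset[OF hH old]] unfolding embeddings_def by simp
    next
      case (new F)
      have FV: "F \<subseteq> verts H"
        by (rule hypergraph_edge_subset[OF hH new(1)])
      have "f ` E = insert (\<phi>2 x) (\<phi>1 ` (F - {x}))"
        using new(3) f_y f_image[of "F - {x}"] FV by auto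
      also have "\<dots> = insert (\<phi>2 x) (\<phi>2 ` (F - {x}))"
        using agree FV by (intro arg_cong[where f = "insert _"] image_cong) auto
      also have "\<dots> = \<phi>2 ` F"
        using new(2) by blast
      finally show ?thesis
        using \<phi>2 new(1) unfolding embeddings_def by simp
    qed
  qed
  ultimately show ?thesis
    unfolding subgraph_def by (intro exI[of _ f]) simp
qed

text \<open>Pigeonhole: the restrictions to \<open>verts H - {x}\<close> take at most \<open>n ^ (|V(H)| - 1)\<close> values.\<close>

lemma embeddings_differing_at_vertex:
  assumes hH: "hypergraph H" and hG: "hypergraph G" and x: "x \<in> verts H"
    and many: "card (verts G) ^ (card (verts H) - 1) < card (embeddings H G)"
  shows "\<exists>\<phi>1\<in>embeddings H G. \<exists>\<phi>2\<in>embeddings H G. \<phi>1 x \<noteq> \<phi>2 x \<and> (\<forall>u\<in>verts H - {x}. \<phi>1 u = \<phi>2 u)"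
proof -
  define W where "W = verts H - {x}"
  have fV: "finite (verts H)" and fX: "finite (verts G)"
    using hypergraph_finite_verts[OF hH] hypergraph_finite_verts[OF hG] .
  have emb_PiE: "\<phi> \<in> verts H \<rightarrow>\<^sub>E verts G" if "\<phi> \<in> embeddings H G" for \<phi>
    using that unfolding embeddings_def injections_def by blast
  have "restrict \<phi> W \<in> W \<rightarrow>\<^sub>E verts G" if "\<phi> \<in> embeddings H G" for \<phi>
    using emb_PiE[OF that] unfolding W_def restrict_PiE_iff by auto
  then have "(\<lambda>\<phi>. restrict \<phi> W) ` embeddings H G \<subseteq> W \<rightarrow>\<^sub>E verts G"
    by blast
  then have "card ((\<lambda>\<phi>. restrict \<phi> W) ` embeddings H G) \<le> card (W \<rightarrow>\<^sub>E verts G)"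
    using fV fX unfolding W_def by (intro card_mono finite_PiE) auto
  also have "\<dots> = card (verts G) ^ (card (verts H) - 1)"
    using fV x by (simp add: card_PiE W_def)
  finally have few: "card ((\<lambda>\<phi>. restrict \<phi> W) ` embeddings H G) < card (embeddings H G)"
    using many by linarith
  have "\<not> inj_on (\<lambda>\<phi>. restrict \<phi> W) (embeddings H G)"
  proof
    assume "inj_on (\<lambda>\<phi>. restrict \<phi> W) (embeddings H G)"
    then have "card ((\<lambda>\<phi>. restrict \<phi> W) ` embeddings H G) = card (embeddings H G)"
      by (rule card_image)
    with few show False
      by simp
  qed
  then obtain \<phi>1 \<phi>2 where \<phi>: "\<phi>1 \<in> embeddings H G" "\<phi>2 \<in> embeddings H G" "\<phi>1 \<noteq> \<phi>2"
      "restrict \<phi>1 W = restrict \<phi>2 W"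
    unfolding inj_on_def by blast
  have agree: "\<phi>1 u = \<phi>2 u" if "u \<in> W" for u
    using fun_cong[OF \<phi>(4), of u] that by simp
  have "\<phi>1 x \<noteq> \<phi>2 x"
  proof
    assume "\<phi>1 x = \<phi>2 x"
    then have "\<phi>1 u = \<phi>2 u" if "u \<in> verts H" for u
      using agree that unfolding W_def by (cases "u = x") auto
    then have "\<phi>1 = \<phi>2"
      using emb_PiE[OF \<phi>(1)] emb_PiE[OF \<phi>(2)] by (rule PiE_ext[rotated 2])
    with \<phi>(3) show False ..
  qed
  then show ?thesis
    using \<phi>(1,2) agree unfolding W_def by blast
qed

lemma supersaturation_embeddings:
  fixes G :: "'b hg"
  assumes hH: "hypergraph H" and d0: "0 \<le> \<delta>" and vm: "card (verts H) \<le> m"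
    and mR: "\<forall>k\<in>edge_sizes H. k \<le> m"
    and piH: "pi_n H m \<le> real (card (edge_sizes H)) - 1 + \<delta>"
    and hG: "hypergraph G" and n: "card (verts G) = n" and mn: "m \<le> n"
    and sG: "edge_sizes G \<subseteq> edge_sizes H"
    and dense: "h_n n G > real (card (edge_sizes H)) - 1 + 2 * \<delta>"
  shows "\<delta> * real (n choose card (verts H))
    < real (card (embeddings H G)) * real (m choose card (verts H))"
proof -
  define v where "v = card (verts H)"
  define e where "e = real (card (embeddings H G))"
  have pos: "real (n choose m) > 0" "real (n choose v) > 0" "real (m choose v) > 0"
    using mn vm unfolding v_def by auto
  have "\<delta> * real (n choose m)
      < real (card {S. S \<subseteq> verts G \<and> card S = m \<and> subgraph H (induced G S)})"
    by (rule supersaturation_sets[OF hH d0 mR piH hG n mn sG dense])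
  also have "\<dots> \<le> e * real ((n - v) choose (m - v))"
    using card_sets_inducing_copy_le[OF hH hG n vm] unfolding e_def v_def
    by (simp flip: of_nat_mult)
  also have "\<dots> = e * real (m choose v) * real (n choose m) / real (n choose v)"
    using choose_ratio[OF vm[folded v_def] mn] pos by (simp add: field_simps)
  finally have "\<delta> * real (n choose m) * real (n choose v) < e * real (m choose v) * real (n choose m)"
    using pos by (simp add: field_simps)
  then show ?thesis
    using pos unfolding e_def v_def by (simp add: mult.commute mult.left_commute)
qed

lemma power_pred_mult_le_choose:
  fixes \<delta> c :: real
  assumes v: "1 \<le> v" "v \<le> n" and d0: "0 \<le> \<delta>" and big: "real v ^ v * c \<le> \<delta> * real n"
  shows "real n ^ (v - 1) * c \<le> \<delta> * real (n choose v)"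
proof -
  have "real v ^ v * (real n ^ (v - 1) * c) = real n ^ (v - 1) * (real v ^ v * c)"
    by (simp add: algebra_simps)
  also have "\<dots> \<le> real n ^ (v - 1) * (\<delta> * real n)"
    using big by (intro mult_left_mono) auto
  also have "\<dots> = \<delta> * real n ^ v"
    using v by (cases v) (auto simp: algebra_simps)
  finally have "real n ^ (v - 1) * c \<le> \<delta> * (real n / real v) ^ v"
    using v by (simp add: power_divide field_simps)
  also have "\<dots> \<le> \<delta> * real (n choose v)"
    using binomial_ge_n_over_k_pow_k[OF v(2)] d0 by (intro mult_left_mono) auto
  finally show ?thesis .
qed

lemma pi_n_clone_vertex_le:
  assumes hH: "hypergraph H" and eH: "edges H \<noteq> {}" and x: "x \<in> verts H" and y: "y \<notin> verts H"
    and d0: "0 \<le> \<delta>" and vm: "card (verts H) \<le> m" and mR: "\<forall>k\<in>edge_sizes H. k \<le> m"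
    and piH: "pi_n H m \<le> real (card (edge_sizes H)) - 1 + \<delta>" and mn: "m \<le> n"
    and big: "real (card (verts H)) ^ card (verts H) * real (m choose card (verts H)) \<le> \<delta> * real n"
  shows "pi_n (clone_vertex H x y) n \<le> real (card (edge_sizes H)) - 1 + 2 * \<delta>"
proof (rule pi_n_least)
  show "edges (clone_vertex H x y) \<noteq> {}"
    using eH by simp
next
  fix G :: "nat hg"
  assume hG: "hypergraph G" and vG: "verts G = {0..<n}"
    and sG: "edge_sizes G \<subseteq> edge_sizes (clone_vertex H x y)"
    and ns: "\<not> subgraph (clone_vertex H x y) G"
  define v where "v = card (verts H)"
  show "h_n n G \<le> real (card (edge_sizes H)) - 1 + 2 * \<delta>"
  proof (rule ccontr)
    assume "\<not> ?thesis"
    then have dense: "h_n n G > real (card (edge_sizes H)) - 1 + 2 * \<delta>"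
      by simp
    have "1 \<le> v"
      using x hypergraph_finite_verts[OF hH] unfolding v_def by (simp add: Suc_le_eq card_gt_0_iff) blast
    then have "real n ^ (v - 1) * real (m choose v) \<le> \<delta> * real (n choose v)"
      using vm mn d0 big unfolding v_def by (intro power_pred_mult_le_choose) auto
    also have "\<dots> < real (card (embeddings H G)) * real (m choose v)"
      using sG vG edge_sizes_clone_vertex[OF hH y] unfolding v_def
      by (intro supersaturation_embeddings[OF hH d0 vm mR piH hG _ mn _ dense]) auto
    finally have "real n ^ (v - 1) < real (card (embeddings H G))"
      by (rule mult_right_less_imp_less) simp
    then have "card (verts G) ^ (card (verts H) - 1) < card (embeddings H G)"
      using vG unfolding v_def by (simp flip: of_nat_power)
    then obtain \<phi>1 \<phi>2 where "\<phi>1 \<in> embeddings H G" "\<phi>2 \<in> embeddings H G" "\<phi>1 x \<noteq> \<phi>2 x"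
        "\<forall>u\<in>verts H - {x}. \<phi>1 u = \<phi>2 u"
      using embeddings_differing_at_vertex[OF hH hG x] by blast
    then have "subgraph (clone_vertex H x y) G"
      by (rule subgraph_clone_vertex[OF hH x y])
    with ns show False ..
  qed
qed

lemma tendsto_of_eventually_bounds:
  fixes f :: "'a \<Rightarrow> real"
  assumes lower: "\<forall>\<^sub>F x in F. L \<le> f x"
    and upper: "\<And>\<epsilon>. 0 < \<epsilon> \<Longrightarrow> \<forall>\<^sub>F x in F. f x \<le> L + \<epsilon>"
  shows "(f \<longlongrightarrow> L) F"
proof (rule order_tendstoI)
  fix a assume "a < L"
  with lower show "\<forall>\<^sub>F x in F. a < f x"
    by (auto elim: eventually_mono)
next
  fix a assume "L < a"
  then have "\<forall>\<^sub>F x in F. f x \<le> L + (a - L) / 2"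
    by (intro upper) simp
  then show "\<forall>\<^sub>F x in F. f x < a"
    using \<open>L < a\<close> by (auto elim!: eventually_mono simp: field_simps)
qed

lemma degenerate_clone_vertex:
  assumes hH: "hypergraph H" and eH: "edges H \<noteq> {}" and dH: "degenerate H"
    and x: "x \<in> verts H" and y: "y \<notin> verts H"
  shows "degenerate (clone_vertex H x y)"
proof -
  define r where "r = real (card (edge_sizes H))"
  define v where "v = card (verts H)"
  have upper: "\<forall>\<^sub>F n in sequentially. pi_n (clone_vertex H x y) n \<le> r - 1 + \<epsilon>"
    if "0 < \<epsilon>" for \<epsilon>
  proof -
    define \<delta> where "\<delta> = \<epsilon> / 2"
    have "\<delta> > 0"
      using that by (simp add: \<delta>_def)
    have "\<forall>\<^sub>F m in sequentially. pi_n H m < r - 1 + \<delta>"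
      using dH \<open>\<delta> > 0\<close> unfolding degenerate_def r_def by (intro order_tendstoD) auto
    moreover have "\<forall>\<^sub>F m in sequentially. v \<le> m"
      by (rule eventually_ge_at_top)
    ultimately have "\<forall>\<^sub>F m in sequentially.
        pi_n H m < r - 1 + \<delta> \<and> v \<le> m \<and> (\<forall>k\<in>edge_sizes H. k \<le> m)"
      using eventually_ge_finite_nat_set[OF hypergraph_finite_edge_sizes[OF hH]]
      by (intro eventually_conj)
    then obtain m where m: "pi_n H m \<le> r - 1 + \<delta>" "v \<le> m" "\<forall>k\<in>edge_sizes H. k \<le> m"
      unfolding eventually_sequentially by (meson less_imp_le order_refl)
    obtain N :: nat where N: "real v ^ v * real (m choose v) / \<delta> < real N"
      using reals_Archimedean2 by blast
    have "pi_n (clone_vertex H x y) n \<le> r - 1 + \<epsilon>" if "max m N \<le> n" for n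
    proof -
      have "real v ^ v * real (m choose v) < \<delta> * real N"
        using N \<open>\<delta> > 0\<close> by (simp add: field_simps)
      also have "\<dots> \<le> \<delta> * real n"
        using that \<open>\<delta> > 0\<close> by simp
      finally have "real v ^ v * real (m choose v) \<le> \<delta> * real n"
        by simp
      then have "pi_n (clone_vertex H x y) n \<le> r - 1 + 2 * \<delta>"
        unfolding r_def using \<open>\<delta> > 0\<close> m that
        by (intro pi_n_clone_vertex_le[OF hH eH x y]) (auto simp: r_def v_def)
      then show ?thesis
        by (simp add: \<delta>_def)
    qed
    then show ?thesis
      by (rule eventually_sequentiallyI)
  qed
  have "\<forall>\<^sub>F n in sequentially. r - 1 \<le> pi_n (clone_vertex H x y) n"
    using eventually_pi_n_lower[OF hypergraph_clone_vertex[OF hH], of x y] eH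
    unfolding r_def edge_sizes_clone_vertex[OF hH y] by simp
  then show ?thesis
    unfolding degenerate_def edge_sizes_clone_vertex[OF hH y] r_def[symmetric]
    by (rule tendsto_of_eventually_bounds[OF _ upper])
qed

subsection \<open>Blowups\<close>

lemma verts_blowup: "verts (blowup H s) = {(v, j). v \<in> verts H \<and> j < s v}"
  by (simp add: blowup_def)

lemma edges_blowup:
  "edges (blowup H s) = {(\<lambda>v. (v, g v)) ` F | F g. F \<in> edges H \<and> (\<forall>v\<in>F. g v < s v)}"
  by (simp add: blowup_def)

lemma hypergraph_blowup:
  assumes hH: "hypergraph H"
  shows "hypergraph (blowup H s)"
proof -
  have "verts (blowup H s) = Sigma (verts H) (\<lambda>v. {0..<s v})"
    by (auto simp: verts_blowup)
  then have "finite (verts (blowup H s))"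
    using hypergraph_finite_verts[OF hH] by simp
  moreover have "edges (blowup H s) \<subseteq> Pow (verts (blowup H s))"
    using hypergraph_edge_subset[OF hH] by (auto simp: edges_blowup verts_blowup)
  ultimately show ?thesis
    unfolding hypergraph_def by blast
qed

lemma edges_blowup_eq_empty:
  assumes "hypergraph H" "\<forall>v\<in>verts H. 0 < s v"
  shows "edges (blowup H s) = {} \<longleftrightarrow> edges H = {}"
proof
  assume "edges (blowup H s) = {}"
  moreover have "(\<lambda>v. (v, 0)) ` F \<in> edges (blowup H s)" if F: "F \<in> edges H" for F
  proof -
    have "\<forall>v\<in>F. 0 < s v"
      using assms(2) hypergraph_edge_subset[OF assms(1) F] by auto
    then show ?thesis
      using F unfolding edges_blowup by (intro CollectI exI[of _ F] exI[of _ "\<lambda>_. 0::nat"]) simp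
  qed
  ultimately show "edges H = {}"
    by blast
qed (simp add: edges_blowup)

lemma blowup_subgraph_base:
  assumes "\<forall>v\<in>verts H. s v \<le> 1"
  shows "subgraph (blowup H s) H"
proof -
  have "inj_on fst (verts (blowup H s))" "fst ` verts (blowup H s) \<subseteq> verts H"
    using assms by (auto simp: verts_blowup inj_on_def)
  moreover have "fst ` E \<in> edges H" if "E \<in> edges (blowup H s)" for E
    using that by (auto simp: edges_blowup image_image)
  ultimately show ?thesis
    unfolding subgraph_def by blast
qed

lemma image_pair_fun_upd:
  "a \<in> F \<Longrightarrow> (\<lambda>v. (v, (g(a := c)) v)) ` F = insert (a, c) ((\<lambda>v. (v, g v)) ` F - {(a, g a)})"
  by auto

text \<open>Enlarging one class of a blowup by a single vertex is a vertex cloning.\<close>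

lemma blowup_subgraph_clone_vertex:
  assumes a: "a \<in> verts H" and sa: "2 \<le> s a"
  shows "subgraph (blowup H s) (clone_vertex (blowup H (s(a := s a - 1))) (a, 0) (a, s a - 1))"
proof -
  define s' where "s' = s(a := s a - 1)"
  have "E \<in> edges (clone_vertex (blowup H s') (a, 0) (a, s a - 1))" if E: "E \<in> edges (blowup H s)" for E
  proof -
    obtain F g where F: "E = (\<lambda>v. (v, g v)) ` F" "F \<in> edges H" "\<forall>v\<in>F. g v < s v"
      using E unfolding edges_blowup by blast
    show ?thesis
    proof (cases "a \<in> F \<and> g a = s a - 1")
      case False
      then have "\<forall>v\<in>F. g v < s' v"
        using F(3) unfolding s'_def by auto
      then show ?thesis
        using F(1,2) by (auto simp: edges_blowup)
    next
      case True
      define E0 where "E0 = (\<lambda>v. (v, (g(a := 0)) v)) ` F"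
      have "E0 \<in> edges (blowup H s')"
        using F(2,3) sa unfolding E0_def edges_blowup s'_def by force
      moreover have "(a, 0) \<in> E0"
        using True unfolding E0_def by force
      moreover have "E = insert (a, s a - 1) (E0 - {(a, 0)})"
        using True F(1) image_pair_fun_upd[of a F "g(a := 0)" "s a - 1"] unfolding E0_def
        by (simp add: image_pair_fun_upd fun_upd_idem)
      ultimately show ?thesis
        by auto
    qed
  qed
  moreover have "verts (blowup H s) \<subseteq> verts (clone_vertex (blowup H s') (a, 0) (a, s a - 1))"
    by (auto simp: verts_blowup s'_def)
  ultimately show ?thesis
    unfolding subgraph_def s'_def by (intro exI[of _ id]) auto
qed

lemma degenerate_blowup_nonempty:
  assumes hH: "hypergraph H" and eH: "edges H \<noteq> {}" and dH: "degenerate H"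
    and s: "\<forall>v\<in>verts H. 0 < s v"
  shows "degenerate (blowup H s)"
  using s
proof (induction "\<Sum>v\<in>verts H. s v" arbitrary: s rule: less_induct)
  case less
  have hB: "hypergraph (blowup H s)"
    by (rule hypergraph_blowup[OF hH])
  have eB: "edges (blowup H s) \<noteq> {}"
    using edges_blowup_eq_empty[OF hH less.prems] eH by simp
  show ?case
  proof (cases "\<exists>a\<in>verts H. 2 \<le> s a")
    case False
    then have "subgraph (blowup H s) H"
      by (intro blowup_subgraph_base) auto
    then show ?thesis
      by (rule degenerate_subgraph[OF hB eB hH _ dH])
  next
    case True
    then obtain a where a: "a \<in> verts H" "2 \<le> s a"
      by blast
    define s' where "s' = s(a := s a - 1)"
    have s': "\<forall>v\<in>verts H. 0 < s' v"
      using less.prems a unfolding s'_def by auto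
    have "(\<Sum>v\<in>verts H. s' v) < (\<Sum>v\<in>verts H. s v)"
      using a hypergraph_finite_verts[OF hH] unfolding s'_def
      by (intro sum_strict_mono_ex1) auto
    then have "degenerate (blowup H s')"
      using less.hyps s' by blast
    moreover have "(a, 0) \<in> verts (blowup H s')" "(a, s a - 1) \<notin> verts (blowup H s')"
      using a s' by (auto simp: verts_blowup s'_def)
    ultimately have "degenerate (clone_vertex (blowup H s') (a, 0) (a, s a - 1))"
      using edges_blowup_eq_empty[OF hH s'] eH
      by (intro degenerate_clone_vertex[OF hypergraph_blowup[OF hH]]) auto
    moreover have "subgraph (blowup H s) (clone_vertex (blowup H s') (a, 0) (a, s a - 1))"
      unfolding s'_def using a by (rule blowup_subgraph_clone_vertex)
    ultimately show ?thesis
      using degenerate_subgraph[OF hB eB hypergraph_clone_vertex[OF hypergraph_blowup[OF hH]]] by blast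
  qed
qed

text \<open>Without edges, \<open>pi_n\<close> is eventually the junk value \<open>Sup {}\<close>, so degeneracy of an edgeless
  hypergraph is a property of that value alone.\<close>

lemma pi_n_edgeless:
  assumes "hypergraph H" "edges H = {}" "card (verts H) \<le> n"
  shows "pi_n H n = Sup {}"
proof -
  have "subgraph H G" if "verts G = {0..<n}" for G :: "nat hg"
    using assms that by (intro edgeless_subgraph) auto
  then have no_hosts: "{h_n n G | G :: nat hg. hypergraph G \<and> verts G = {0..<n} \<and>
      edge_sizes G \<subseteq> edge_sizes H \<and> \<not> subgraph H G} = {}"
    by blast
  show ?thesis
    unfolding pi_n_def no_hosts ..
qed

lemma degenerate_edgeless:
  assumes hH: "hypergraph H" "edges H = {}" "degenerate H"
    and hK: "hypergraph K" "edges K = {}"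
  shows "degenerate K"
proof -
  have "\<forall>\<^sub>F n in sequentially. pi_n H n = pi_n K n"
    using pi_n_edgeless[OF hH(1,2)] pi_n_edgeless[OF hK]
    by (intro eventually_sequentiallyI[of "max (card (verts H)) (card (verts K))"]) simp
  moreover have "edge_sizes H = edge_sizes K"
    using hH(2) hK(2) by (simp add: edge_sizes_def)
  ultimately show ?thesis
    using hH(3) unfolding degenerate_def by (auto intro: Lim_transform_eventually)
qed

lemma degenerate_blowup:
  assumes "hypergraph H" "degenerate H" "\<forall>v\<in>verts H. 0 < s v"
  shows "degenerate (blowup H s)"
proof (cases "edges H = {}")
  case True
  then show ?thesis
    using assms edges_blowup_eq_empty[OF assms(1,3)]
    by (intro degenerate_edgeless[OF assms(1) True assms(2) hypergraph_blowup]) auto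
next
  case False
  then show ?thesis
    using degenerate_blowup_nonempty assms by blast
qed

lemma degenerate_subgraph_blowup_flag:
  assumes hF: "hypergraph Fl" and fl: "flag Fl" and t: "\<forall>v\<in>verts Fl. 0 < t v"
    and hK: "hypergraph K" and eK: "edges K \<noteq> {}" and sub: "subgraph K (blowup Fl t)"
  shows "degenerate K"
proof -
  have "edges Fl \<noteq> {}"
    using subgraph_edges_ne[OF sub eK] edges_blowup_eq_empty[OF hF t] by simp
  then have "degenerate (blowup Fl t)"
    using degenerate_flag[OF hF fl] by (intro degenerate_blowup[OF hF _ t])
  then show ?thesis
    by (rule degenerate_subgraph[OF hK eK hypergraph_blowup[OF hF] sub])
qed

theorem mainTheorem12:
  fixes H :: "'a hg"
  assumes "hypergraph H" and "degenerate H"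
  shows "(\<forall>H' :: 'b hg. hypergraph H' \<and> edges H' \<noteq> {} \<and> subgraph H' H \<longrightarrow> degenerate H')
       \<and> (\<forall>s. (\<forall>v\<in>verts H. 0 < s v) \<longrightarrow> degenerate (blowup H s))
       \<and> (\<forall>(Fl :: 'c hg) t (K :: 'd hg).
            hypergraph Fl \<and> flag Fl \<and> (\<forall>v\<in>verts Fl. 0 < t v) \<and>
            hypergraph K \<and> edges K \<noteq> {} \<and> subgraph K (blowup Fl t) \<longrightarrow> degenerate K)"
  using degenerate_subgraph[OF _ _ assms(1) _ assms(2)] degenerate_blowup[OF assms]
    degenerate_subgraph_blowup_flag
  by blast

end
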